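(* Let $G$ be a temporal network whose TEG $\mathcal{G}$ is weakly connected, with each edge $(e_i,e_j)$ weighted by its inter-event time $\tau((e_i,e_j)) = t_j - t_i$. Consider paths in the underlying undirected graph of $\mathcal{G}$, i.e. sequences of vertices $x_0, x_1, \dots, x_k$ such that for each $r$ either $(x_{r-1},x_r)$ or $(x_r,x_{r-1})$ is an edge of $\mathcal{G}$. The signed length of such a path is $\sum_{r=1}^{k} s_r$, where $s_r = \tau((x_{r-1},x_r))$ if $(x_{r-1},x_r)$ is an edge of $\mathcal{G}$ (forward traversal) and $s_r = -\tau((x_r,x_{r-1}))$ otherwise (backward traversal). Then every path of maximal signed length contains both the earliest event and the latest event of the temporal network.
   Context: A temporal network is $G=G(V,E,T)$, where $V\subset\mathbb{N}$ is a set of nodes, $T\subset\mathbb{R}_{\ge 0}$ a non-empty set of times, and $E\subset V^2\times T$ a finite set of events $e_i=(u_i,v_i,t_i)$, with $u_i\neq v_i$. All event times $t_i$ are distinct, and events are indexed in increasing time order. For $\Delta t \in (0,\infty]$ and an event $e_i$ and a node $w\in\{u_i,v_i\}$, let $S(w;i)=\{k : w\in\{u_k,v_k\},\ 0<t_k-t_i<\Delta t\}$. The $\Delta t$-temporal event graph ($\Delta t$-TEG) is the directed graph whose vertex set is $E$ and whose edges are the pairs $(e_i,e_j)$ with $j=\min S(u_i;i)$ or $j=\min S(v_i;i)$ (i.e. each event is joined to the next event, within time $\Delta t$, of each of its two nodes). The TEG is the $\Delta t$-TEG with $\Delta t=\infty$. *)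

theory Defs
  imports Complex_Main "HOL-Library.Extended_Real"
begin

type_synonym event = "nat \<times> nat \<times> real"

definition ev_u :: "event \<Rightarrow> nat" where "ev_u e = fst e"
definition ev_v :: "event \<Rightarrow> nat" where "ev_v e = fst (snd e)"
definition ev_t :: "event \<Rightarrow> real" where "ev_t e = snd (snd e)"

definition temporal_network :: "nat set \<Rightarrow> real set \<Rightarrow> event set \<Rightarrow> bool" where
  "temporal_network V T E \<longleftrightarrow>
     T \<noteq> {} \<and> (\<forall>t\<in>T. 0 \<le> t) \<and> finite E \<and>
     (\<forall>e\<in>E. ev_u e \<in> V \<and> ev_v e \<in> V \<and> ev_t e \<in> T \<and> ev_u e \<noteq> ev_v e) \<and>
     inj_on ev_t E"

definition dt_teg_edge :: "ereal \<Rightarrow> event set \<Rightarrow> event \<Rightarrow> event \<Rightarrow> bool" where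
  "dt_teg_edge dt E e e' \<longleftrightarrow> e \<in> E \<and> e' \<in> E \<and>
     (\<exists>w\<in>{ev_u e, ev_v e}.
        w \<in> {ev_u e', ev_v e'} \<and> 0 < ev_t e' - ev_t e \<and> ereal (ev_t e' - ev_t e) < dt \<and>
        (\<forall>e''\<in>E. w \<in> {ev_u e'', ev_v e''} \<and> 0 < ev_t e'' - ev_t e \<and>
                   ereal (ev_t e'' - ev_t e) < dt \<longrightarrow> ev_t e' \<le> ev_t e''))"

definition teg_edge :: "event set \<Rightarrow> event \<Rightarrow> event \<Rightarrow> bool" where
  "teg_edge E = dt_teg_edge \<infinity> E"

definition teg_adj :: "event set \<Rightarrow> event \<Rightarrow> event \<Rightarrow> bool" where
  "teg_adj E x y \<longleftrightarrow> teg_edge E x y \<or> teg_edge E y x"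

definition teg_weakly_connected :: "event set \<Rightarrow> bool" where
  "teg_weakly_connected E \<longleftrightarrow> (\<forall>x\<in>E. \<forall>y\<in>E. (teg_adj E)\<^sup>*\<^sup>* x y)"

definition tau :: "event \<times> event \<Rightarrow> real" where
  "tau p = ev_t (snd p) - ev_t (fst p)"

definition teg_upath :: "event set \<Rightarrow> event list \<Rightarrow> bool" where
  "teg_upath E xs \<longleftrightarrow> xs \<noteq> [] \<and> set xs \<subseteq> E \<and>
     (\<forall>r. 0 < r \<and> r < length xs \<longrightarrow> teg_adj E (xs ! (r - 1)) (xs ! r))"

definition step_len :: "event set \<Rightarrow> event \<Rightarrow> event \<Rightarrow> real" where
  "step_len E a b = (if teg_edge E a b then tau (a, b) else - tau (b, a))"

definition signed_length :: "event set \<Rightarrow> event list \<Rightarrow> real" where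
  "signed_length E xs = (\<Sum>r = 1..<length xs. step_len E (xs ! (r - 1)) (xs ! r))"

end

theory Submission
  imports Defs
begin

text \<open>A backward step from \<open>a\<close> to \<open>b\<close> contributes \<open>-\<tau>(b,a) = t\<^sub>b - t\<^sub>a\<close>, exactly what a forward
  step contributes, so the signed length of any path telescopes to the time of its last event
  minus the time of its first. Since the TEG is weakly connected, any two events are the
  endpoints of some path; hence a path of maximal signed length starts at an event of minimal
  time and ends at one of maximal time, and distinctness of event times makes these the earliest
  and the latest event.\<close>

lemma step_len_eq_time_diff: "step_len E a b = ev_t b - ev_t a"
  by (simp add: step_len_def tau_def)

lemma signed_length_eq_endpoint_times:
  assumes "xs \<noteq> []"
  shows "signed_length E xs = ev_t (last xs) - ev_t (hd xs)"
proof -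
  obtain n where n: "length xs = Suc n" using assms by (cases xs) auto
  have "signed_length E xs = (\<Sum>r = Suc 0..<Suc n. ev_t (xs ! r) - ev_t (xs ! (r - 1)))"
    unfolding signed_length_def n step_len_eq_time_diff by simp
  also have "\<dots> = (\<Sum>i<n. ev_t (xs ! Suc i) - ev_t (xs ! i))"
    by (simp only: sum.shift_bounds_Suc_ivl lessThan_atLeast0 diff_Suc_1)
  also have "\<dots> = ev_t (xs ! n) - ev_t (xs ! 0)"
    by (rule sum_lessThan_telescope)
  finally show ?thesis
    using n assms by (simp add: last_conv_nth hd_conv_nth)
qed

lemma teg_adj_in_events: "teg_adj E a b \<Longrightarrow> a \<in> E \<and> b \<in> E"
  unfolding teg_adj_def teg_edge_def dt_teg_edge_def by auto

lemma teg_upath_snoc: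
  assumes "teg_upath E ys" and "teg_adj E (last ys) z"
  shows "teg_upath E (ys @ [z])"
proof -
  have ne: "ys \<noteq> []" and "set ys \<subseteq> E" using assms(1) by (auto simp: teg_upath_def)
  moreover have "z \<in> E" using teg_adj_in_events[OF assms(2)] by blast
  moreover have "teg_adj E ((ys @ [z]) ! (r - 1)) ((ys @ [z]) ! r)"
    if "0 < r" "r < Suc (length ys)" for r
  proof (cases "r < length ys")
    case True
    then show ?thesis using assms(1) that by (auto simp: teg_upath_def nth_append)
  next
    case False
    then have "r = length ys" using that by simp
    then show ?thesis using assms(2) ne by (auto simp: nth_append last_conv_nth)
  qed
  ultimately show ?thesis by (auto simp: teg_upath_def)
qed

lemma teg_upath_if_rtranclp_teg_adj:
  assumes "(teg_adj E)\<^sup>*\<^sup>* x y" and "x \<in> E"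
  shows "\<exists>ys. teg_upath E ys \<and> hd ys = x \<and> last ys = y"
  using assms(1)
proof (induction rule: rtranclp_induct)
  case base
  show ?case using assms(2) by (intro exI[of _ "[x]"]) (auto simp: teg_upath_def)
next
  case (step y z)
  then obtain ys where ys: "teg_upath E ys" "hd ys = x" "last ys = y" by blast
  then have "ys \<noteq> []" by (simp add: teg_upath_def)
  then show ?case
    using teg_upath_snoc[of E ys z] ys step.hyps(2) by (intro exI[of _ "ys @ [z]"]) auto
qed

lemma max_signed_length_path_endpoint_times:
  assumes "teg_weakly_connected E"
    and "teg_upath E xs"
    and "\<forall>ys. teg_upath E ys \<longrightarrow> signed_length E ys \<le> signed_length E xs"
    and "e \<in> E"
  shows "ev_t (hd xs) \<le> ev_t e" and "ev_t e \<le> ev_t (last xs)"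
proof -
  have ne: "xs \<noteq> []" and "set xs \<subseteq> E" using assms(2) by (auto simp: teg_upath_def)
  then have hd: "hd xs \<in> E" and last: "last xs \<in> E" by auto
  have length_le: "ev_t b - ev_t a \<le> ev_t (last xs) - ev_t (hd xs)"
    if a: "a \<in> E" and b: "b \<in> E" for a b
  proof -
    have "(teg_adj E)\<^sup>*\<^sup>* a b"
      using assms(1) a b by (simp add: teg_weakly_connected_def)
    then obtain ys where ys: "teg_upath E ys" "hd ys = a" "last ys = b"
      using teg_upath_if_rtranclp_teg_adj[OF _ a] by blast
    then have "signed_length E ys = ev_t b - ev_t a"
      using signed_length_eq_endpoint_times[of ys E] by (simp add: teg_upath_def)
    moreover have "signed_length E ys \<le> signed_length E xs"
      using assms(3) ys(1) by blast
    ultimately show ?thesis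
      using signed_length_eq_endpoint_times[OF ne] by simp
  qed
  show "ev_t (hd xs) \<le> ev_t e" using length_le[OF assms(4) last] by simp
  show "ev_t e \<le> ev_t (last xs)" using length_le[OF hd assms(4)] by simp
qed

theorem mainTheorem1:
  assumes "temporal_network V T E"
    and "teg_weakly_connected E"
    and "teg_upath E xs"
    and "\<forall>ys. teg_upath E ys \<longrightarrow> signed_length E ys \<le> signed_length E xs"
  shows "(\<forall>e\<in>E. (\<forall>e'\<in>E. ev_t e \<le> ev_t e') \<longrightarrow> e \<in> set xs) \<and>
         (\<forall>e\<in>E. (\<forall>e'\<in>E. ev_t e' \<le> ev_t e) \<longrightarrow> e \<in> set xs)"
proof -
  have ne: "xs \<noteq> []" and "set xs \<subseteq> E" using assms(3) by (auto simp: teg_upath_def)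
  then have hd: "hd xs \<in> E" and last: "last xs \<in> E" by auto
  have inj: "inj_on ev_t E" using assms(1) by (simp add: temporal_network_def)
  note endpoint_times = max_signed_length_path_endpoint_times[OF assms(2-4)]
  show ?thesis
  proof (intro conjI ballI impI)
    fix e assume "e \<in> E" and "\<forall>e'\<in>E. ev_t e \<le> ev_t e'"
    then have "ev_t (hd xs) = ev_t e" using endpoint_times(1) hd by (meson order_antisym)
    then have "hd xs = e" using inj hd \<open>e \<in> E\<close> by (meson inj_onD)
    then show "e \<in> set xs" using ne by auto
  next
    fix e assume "e \<in> E" and "\<forall>e'\<in>E. ev_t e' \<le> ev_t e"
    then have "ev_t (last xs) = ev_t e" using endpoint_times(2) last by (meson order_antisym)
    then have "last xs = e" using inj last \<open>e \<in> E\<close> by (meson inj_onD)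
    then show "e \<in> set xs" using ne by auto
  qed
qed

end
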